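(* For every state $x$ and every round $t\ge1$, \[ \sum_{i\in V}\frac{\operatorname{Var}[W_i(X^t)\mid X^{t-1}=x]}{s_i} \le \sum_{(i,j)} f_{ij}(x)\left(\frac{1}{s_i}+\frac{1}{s_j}\right), \] where the sum on the right runs over all ordered pairs $(i,j)$ of adjacent processors with $\ell_i(x)-\ell_j(x)>1/s_j$, and $f_{ij}(x)=\frac{\ell_i(x)-\ell_j(x)}{\alpha\, d_{ij}\,(1/s_i+1/s_j)}$.
   Context: $G=(V,E)$ is an undirected graph (processors as vertices); $\deg(i)$ is the degree and $d_{ij}=\max\{\deg(i),\deg(j)\}$. Processor $i$ has speed $s_i>0$; $s_{\max}=\max_i s_i$; $\alpha=4s_{\max}$. Task $\ell$ has weight $w_\ell\in(0,1]$. In state $x$, $W_i(x)$ is the total weight on processor $i$ and $\ell_i(x)=W_i(x)/s_i$. Protocol: in each round every task, independently, with $i$ its current processor, chooses a uniformly random neighbor $j$; if $\ell_i-\ell_j>1/s_j$ it moves to $j$ with probability $\frac{\deg(i)}{d_{ij}}\cdot\frac{\ell_i-\ell_j}{\alpha(1/s_i+1/s_j)W_i}$, otherwise stays. $X^t$ is the state after $t$ rounds. *)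

theory Defs
  imports "HOL-Probability.Probability"
begin

text \<open>Graph: symmetric irreflexive adjacency relation E on a finite vertex type 'v.
  Tasks form a finite type 'k; a state is an assignment x :: 'k => 'v.\<close>

definition deg :: "('v \<Rightarrow> 'v \<Rightarrow> bool) \<Rightarrow> 'v \<Rightarrow> nat" where
  "deg E i = card {j. E i j}"

definition dmax :: "('v \<Rightarrow> 'v \<Rightarrow> bool) \<Rightarrow> 'v \<Rightarrow> 'v \<Rightarrow> nat" where
  "dmax E i j = max (deg E i) (deg E j)"

definition Wt :: "('k::finite \<Rightarrow> real) \<Rightarrow> ('k \<Rightarrow> 'v) \<Rightarrow> 'v \<Rightarrow> real" where
  "Wt w x i = (\<Sum>l\<in>{l. x l = i}. w l)"

definition load :: "('v \<Rightarrow> real) \<Rightarrow> ('k::finite \<Rightarrow> real) \<Rightarrow> ('k \<Rightarrow> 'v) \<Rightarrow> 'v \<Rightarrow> real" where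
  "load s w x i = Wt w x i / s i"

definition alpha :: "('v::finite \<Rightarrow> real) \<Rightarrow> real" where
  "alpha s = 4 * Max (range s)"

definition move_prob :: "('v::finite \<Rightarrow> 'v \<Rightarrow> bool) \<Rightarrow> ('v \<Rightarrow> real) \<Rightarrow> ('k::finite \<Rightarrow> real)
    \<Rightarrow> ('k \<Rightarrow> 'v) \<Rightarrow> 'v \<Rightarrow> 'v \<Rightarrow> real" where
  "move_prob E s w x i j =
     (if load s w x i - load s w x j > 1 / s j
      then real (deg E i) / real (dmax E i j) *
           ((load s w x i - load s w x j) / (alpha s * (1 / s i + 1 / s j) * Wt w x i))
      else 0)"

definition task_step :: "('v::finite \<Rightarrow> 'v \<Rightarrow> bool) \<Rightarrow> ('v \<Rightarrow> real) \<Rightarrow> ('k::finite \<Rightarrow> real)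
    \<Rightarrow> ('k \<Rightarrow> 'v) \<Rightarrow> 'k \<Rightarrow> 'v pmf" where
  "task_step E s w x l =
     (let i = x l in
      if {j. E i j} = {} then return_pmf i
      else bind_pmf (pmf_of_set {j. E i j}) (\<lambda>j.
             bind_pmf (bernoulli_pmf (move_prob E s w x i j)) (\<lambda>b.
               return_pmf (if b then j else i))))"

text \<open>Distribution of X^t given X^(t-1) = x: all tasks move independently.\<close>
definition round_pmf :: "('v::finite \<Rightarrow> 'v \<Rightarrow> bool) \<Rightarrow> ('v \<Rightarrow> real) \<Rightarrow> ('k::finite \<Rightarrow> real)
    \<Rightarrow> ('k \<Rightarrow> 'v) \<Rightarrow> ('k \<Rightarrow> 'v) pmf" where
  "round_pmf E s w x = Pi_pmf UNIV undefined (\<lambda>l. task_step E s w x l)"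

definition flow :: "('v::finite \<Rightarrow> 'v \<Rightarrow> bool) \<Rightarrow> ('v \<Rightarrow> real) \<Rightarrow> ('k::finite \<Rightarrow> real)
    \<Rightarrow> ('k \<Rightarrow> 'v) \<Rightarrow> 'v \<Rightarrow> 'v \<Rightarrow> real" where
  "flow E s w x i j = (load s w x i - load s w x j) /
      (alpha s * real (dmax E i j) * (1 / s i + 1 / s j))"

end

theory Submission
  imports Defs
begin

text \<open>Given \<open>X\<^sup>t\<^sup>-\<^sup>1 = x\<close>, the load \<open>W\<^sub>i\<close> is a sum over tasks of independent terms \<open>w\<^sub>l\<close>
  or \<open>0\<close> according to whether task \<open>l\<close> lands on \<open>i\<close>, so its variance is the sum of their variances.
  Such a term has variance \<open>w\<^sub>l\<^sup>2 q (1 - q)\<close>, where \<open>q\<close> is the landing probability; since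
  \<open>w\<^sub>l \<le> 1\<close> this is at most \<open>w\<^sub>l (1 - q)\<close> for a task now on \<open>i\<close> and at most \<open>w\<^sub>l q\<close> otherwise.
  A task on \<open>k\<close> reaches a neighbour \<open>j\<close> with probability at most
  \<open>r\<^sub>k\<^sub>j = move_prob / deg k\<close> (at most, because \<open>bernoulli_pmf\<close> clamps \<open>move_prob\<close> to \<open>[0,1]\<close>),
  and \<open>W\<^sub>k r\<^sub>k\<^sub>j\<close> equals \<open>f\<^sub>k\<^sub>j\<close> on active edges and vanishes elsewhere. Hence
  \<open>Var W\<^sub>i \<le> \<Sum>\<^sub>j f\<^sub>i\<^sub>j + \<Sum>\<^sub>k f\<^sub>k\<^sub>i\<close>, and dividing by \<open>s\<^sub>i\<close> and summing over \<open>i\<close> counts every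
  active edge \<open>(i, j)\<close> with weight \<open>1/s\<^sub>i + 1/s\<^sub>j\<close>.\<close>

lemma integrable_measure_pmf_finite_type [simp]:
  "integrable (measure_pmf (M :: 'a::finite pmf)) (f :: 'a \<Rightarrow> real)"
  by (rule integrable_measure_pmf_finite) simp

lemma expectation_Pi_pmf_component:
  fixes p :: "'k::finite \<Rightarrow> 'v::finite pmf" and g :: "'v \<Rightarrow> real"
  shows "measure_pmf.expectation (Pi_pmf UNIV d p) (\<lambda>y. g (y l)) = measure_pmf.expectation (p l) g"
proof -
  have "measure_pmf.expectation (Pi_pmf UNIV d p) (\<lambda>y. g (y l))
      = measure_pmf.expectation (map_pmf (\<lambda>y. y l) (Pi_pmf UNIV d p)) g"
    by simp
  also have "map_pmf (\<lambda>y. y l) (Pi_pmf UNIV d p) = p l"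
    by (simp add: Pi_pmf_component)
  finally show ?thesis .
qed

lemma expectation_Pi_pmf_mult_components:
  fixes p :: "'k::finite \<Rightarrow> 'v::finite pmf" and Z :: "'k \<Rightarrow> 'v \<Rightarrow> real"
  assumes "l \<noteq> m"
  shows "measure_pmf.expectation (Pi_pmf UNIV d p) (\<lambda>y. Z l (y l) * Z m (y m))
     = measure_pmf.expectation (p l) (Z l) * measure_pmf.expectation (p m) (Z m)"
proof -
  let ?P = "measure_pmf (Pi_pmf (UNIV::'k set) d p)"
  have coordinates: "prob_space.indep_vars ?P (\<lambda>_. count_space UNIV) (\<lambda>x f. f x) UNIV"
    by (rule indep_vars_Pi_pmf) simp
  have "prob_space.indep_vars ?P (\<lambda>_. borel) (\<lambda>l y. Z l (y l)) {l, m}"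
    using prob_space.indep_vars_subset[OF prob_space_measure_pmf
        prob_space.indep_vars_compose2[OF prob_space_measure_pmf coordinates, of Z "\<lambda>_. borel"]]
    by auto
  then have "prob_space.indep_var ?P borel (\<lambda>y. Z l (y l)) borel (\<lambda>y. Z m (y m))"
    using prob_space.indep_vars_sum[OF prob_space_measure_pmf, of "{m}" l] assms by auto
  from prob_space.indep_var_lebesgue_integral[OF prob_space_measure_pmf this]
  show ?thesis by (simp add: expectation_Pi_pmf_component)
qed

lemma variance_Pi_pmf_sum:
  fixes p :: "'k::finite \<Rightarrow> 'v::finite pmf" and Z :: "'k \<Rightarrow> 'v \<Rightarrow> real"
  shows "measure_pmf.variance (Pi_pmf UNIV d p) (\<lambda>y. \<Sum>l\<in>UNIV. Z l (y l))
     = (\<Sum>l\<in>UNIV. measure_pmf.variance (p l) (Z l))"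
proof -
  let ?P = "Pi_pmf (UNIV::'k set) d p"
  define D where "D l v = Z l v - measure_pmf.expectation (p l) (Z l)" for l v
  have centered: "measure_pmf.expectation (p l) (D l) = 0" for l
    unfolding D_def by (simp add: measure_pmf.prob_space)
  have uncorrelated: "measure_pmf.expectation ?P (\<lambda>y. D l (y l) * D m (y m))
      = (if m = l then measure_pmf.variance (p l) (Z l) else 0)" for l m
  proof (cases "m = l")
    case True
    then show ?thesis
      using expectation_Pi_pmf_component[of d p "\<lambda>v. D l v * D l v" l]
      by (simp add: D_def power2_eq_square)
  qed (simp add: expectation_Pi_pmf_mult_components centered)
  have "measure_pmf.variance ?P (\<lambda>y. \<Sum>l\<in>UNIV. Z l (y l))
      = measure_pmf.expectation ?P (\<lambda>y. (\<Sum>l\<in>UNIV. D l (y l))\<^sup>2)"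
    by (simp add: expectation_Pi_pmf_component D_def sum_subtractf)
  also have "\<dots> = (\<Sum>l\<in>UNIV. \<Sum>m\<in>UNIV. measure_pmf.expectation ?P (\<lambda>y. D l (y l) * D m (y m)))"
    by (simp add: power2_eq_square sum_product)
  also have "\<dots> = (\<Sum>l\<in>UNIV. measure_pmf.variance (p l) (Z l))"
    by (simp add: uncorrelated)
  finally show ?thesis .
qed

lemma variance_indicator_le:
  fixes M :: "'v::finite pmf"
  assumes "0 \<le> c" "c \<le> 1"
  shows "measure_pmf.variance M (\<lambda>v. if v = i then c else 0) \<le> c * pmf M i"
    and "measure_pmf.variance M (\<lambda>v. if v = i then c else 0) \<le> c * (1 - pmf M i)"
proof -
  let ?q = "pmf M i"
  have q: "0 \<le> ?q" "?q \<le> 1" by (simp_all add: pmf_le_1)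
  have "measure_pmf.expectation M (\<lambda>v. if v = i then c else 0) = c * ?q"
       "measure_pmf.expectation M (\<lambda>v. (if v = i then c else 0)\<^sup>2) = c\<^sup>2 * ?q"
    by (subst integral_measure_pmf_real[where A="{i}"]; auto split: if_splits)+
  then have variance: "measure_pmf.variance M (\<lambda>v. if v = i then c else 0) = (c * ?q) * (c * (1 - ?q))"
    by (subst measure_pmf.variance_eq) (simp_all add: power2_eq_square algebra_simps)
  have "0 \<le> c * ?q" "c * ?q \<le> 1" "0 \<le> c * (1 - ?q)" "c * (1 - ?q) \<le> 1"
    using assms q by (simp_all add: mult_le_one)
  then show "measure_pmf.variance M (\<lambda>v. if v = i then c else 0) \<le> c * ?q"
    and "measure_pmf.variance M (\<lambda>v. if v = i then c else 0) \<le> c * (1 - ?q)"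
    unfolding variance by (simp_all add: mult_left_le_one_le mult_right_le_one_le)
qed

lemma pmf_bernoulli_True_le: "0 \<le> p \<Longrightarrow> pmf (bernoulli_pmf p) True \<le> p"
  by (cases "p \<le> 1") (auto intro: order.trans[OF pmf_le_1])

lemma pmf_choose_then_move_le:
  assumes "finite N" "N \<noteq> {}" "v \<noteq> i" "0 \<le> p v"
  shows "pmf (pmf_of_set N \<bind> (\<lambda>j. bernoulli_pmf (p j) \<bind> (\<lambda>b. return_pmf (if b then j else i)))) v
    \<le> (if v \<in> N then p v / card N else 0)"
proof -
  have move: "pmf (bernoulli_pmf q \<bind> (\<lambda>b. return_pmf (if b then j else i))) v
      = (if j = v then pmf (bernoulli_pmf q) True else 0)" for q j
  proof -
    have "(\<lambda>b. if b then j else i) -` {v} = (if j = v then {True} else {})"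
      using \<open>v \<noteq> i\<close> by (auto split: if_splits)
    then show ?thesis
      by (simp add: map_pmf_def[symmetric] pmf_map measure_pmf_single)
  qed
  have "pmf (pmf_of_set N \<bind> (\<lambda>j. bernoulli_pmf (p j) \<bind> (\<lambda>b. return_pmf (if b then j else i)))) v
      = (\<Sum>j\<in>N. if j = v then pmf (bernoulli_pmf (p j)) True else 0) / card N"
    using assms(1,2) by (simp add: pmf_bind_pmf_of_set move)
  also have "\<dots> = (if v \<in> N then pmf (bernoulli_pmf (p v)) True / card N else 0)"
    using assms(1) by simp
  also have "\<dots> \<le> (if v \<in> N then p v / card N else 0)"
    using assms(4) by (simp add: divide_right_mono pmf_bernoulli_True_le)
  finally show ?thesis .
qed

lemma one_minus_pmf_eq_sum_others:
  fixes M :: "'a::finite pmf"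
  shows "1 - pmf M a = (\<Sum>b\<in>UNIV - {a}. pmf M b)"
  using sum_pmf_eq_1[of UNIV M] sum.remove[of UNIV a "pmf M"] by simp

lemma alpha_pos:
  assumes "\<And>i. 0 < s i"
  shows "0 < alpha s"
proof -
  have "s i \<le> Max (range s)" for i
    by (rule Max_ge) auto
  then show ?thesis
    unfolding alpha_def using assms[of undefined] by (smt (verit))
qed

lemma Wt_nonneg: "(\<And>l. 0 \<le> w l) \<Longrightarrow> 0 \<le> Wt w x i"
  unfolding Wt_def by (simp add: sum_nonneg)

lemma load_nonneg: "(\<And>l. 0 \<le> w l) \<Longrightarrow> (\<And>i. 0 < s i) \<Longrightarrow> 0 \<le> load s w x i"
  unfolding load_def by (simp add: Wt_nonneg less_imp_le)

lemma move_prob_nonneg: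
  assumes "\<And>l. 0 \<le> w l" "\<And>i. 0 < s i"
  shows "0 \<le> move_prob E s w x i j"
proof -
  have "0 < 1 / s j" "0 < 1 / s i" using assms(2) by simp_all
  then have "0 \<le> alpha s * (1 / s i + 1 / s j) * Wt w x i"
    using alpha_pos[of s] Wt_nonneg[of w x i] assms
    by (intro mult_nonneg_nonneg add_nonneg_nonneg) (simp_all add: less_imp_le)
  moreover have "1 / s j < load s w x i - load s w x j \<Longrightarrow> 0 \<le> load s w x i - load s w x j"
    using \<open>0 < 1 / s j\<close> by linarith
  ultimately show ?thesis
    by (auto simp: move_prob_def intro!: mult_nonneg_nonneg divide_nonneg_nonneg)
qed

definition move_rate :: "('v::finite \<Rightarrow> 'v \<Rightarrow> bool) \<Rightarrow> ('v \<Rightarrow> real) \<Rightarrow> ('k::finite \<Rightarrow> real)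
    \<Rightarrow> ('k \<Rightarrow> 'v) \<Rightarrow> 'v \<Rightarrow> 'v \<Rightarrow> real" where
  "move_rate E s w x k j = (if E k j then move_prob E s w x k j / real (deg E k) else 0)"

lemma pmf_task_step_le_move_rate:
  assumes "\<And>l. 0 \<le> w l" "\<And>i. 0 < s i" and "v \<noteq> x l"
  shows "pmf (task_step E s w x l) v \<le> move_rate E s w x (x l) v"
proof (cases "{j. E (x l) j} = {}")
  case True
  then show ?thesis
    using \<open>v \<noteq> x l\<close> by (simp add: task_step_def move_rate_def)
next
  case False
  then show ?thesis
    using pmf_choose_then_move_le[of "{j. E (x l) j}" v "x l" "move_prob E s w x (x l)"]
      move_prob_nonneg[of w s E x "x l" v] assms
    by (auto simp: task_step_def Let_def move_rate_def deg_def split: if_splits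
        intro: order.antisym)
qed

lemma task_step_leave_le_sum_move_rate:
  assumes "\<And>i. \<not> E i i" "\<And>l. 0 \<le> w l" "\<And>i. 0 < s i"
  shows "1 - pmf (task_step E s w x l) (x l) \<le> (\<Sum>j\<in>UNIV. move_rate E s w x (x l) j)"
proof -
  have "1 - pmf (task_step E s w x l) (x l) = (\<Sum>j\<in>UNIV - {x l}. pmf (task_step E s w x l) j)"
    by (rule one_minus_pmf_eq_sum_others)
  also have "\<dots> \<le> (\<Sum>j\<in>UNIV - {x l}. move_rate E s w x (x l) j)"
    by (intro sum_mono pmf_task_step_le_move_rate assms(2,3)) auto
  also have "\<dots> = (\<Sum>j\<in>UNIV. move_rate E s w x (x l) j)"
    using sum.remove[of UNIV "x l" "move_rate E s w x (x l)"] assms(1)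
    by (simp add: move_rate_def)
  finally show ?thesis .
qed

lemma variance_task_step_le:
  assumes "\<And>i. \<not> E i i" "\<And>l. 0 \<le> w l" "\<And>l. w l \<le> 1" "\<And>i. 0 < s i"
  shows "measure_pmf.variance (task_step E s w x l) (\<lambda>v. if v = i then w l else 0)
    \<le> w l * ((if x l = i then \<Sum>j\<in>UNIV. move_rate E s w x i j else 0) + move_rate E s w x (x l) i)"
proof (cases "x l = i")
  case True
  have "measure_pmf.variance (task_step E s w x l) (\<lambda>v. if v = i then w l else 0)
      \<le> w l * (1 - pmf (task_step E s w x l) i)"
    using assms(2,3) by (rule variance_indicator_le(2))
  also have "\<dots> \<le> w l * (\<Sum>j\<in>UNIV. move_rate E s w x i j)"
    using task_step_leave_le_sum_move_rate[of E w s x l] True assms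
    by (simp add: mult_left_mono)
  finally show ?thesis
    using True assms(1) by (simp add: move_rate_def)
next
  case False
  have "measure_pmf.variance (task_step E s w x l) (\<lambda>v. if v = i then w l else 0)
      \<le> w l * pmf (task_step E s w x l) i"
    using assms(2,3) by (rule variance_indicator_le(1))
  also have "\<dots> \<le> w l * move_rate E s w x (x l) i"
    using pmf_task_step_le_move_rate[of w s i x l E] False assms
    by (simp add: mult_left_mono)
  finally show ?thesis
    using False by simp
qed

lemma sum_weights_by_processor:
  fixes x :: "'k::finite \<Rightarrow> 'v::finite"
  shows "(\<Sum>l\<in>UNIV. w l * h (x l)) = (\<Sum>k\<in>UNIV. Wt w x k * h k)"
proof -
  have "(\<Sum>k\<in>UNIV. Wt w x k * h k) = (\<Sum>k\<in>UNIV. \<Sum>l\<in>{l\<in>UNIV. x l = k}. w l * h (x l))"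
    unfolding Wt_def by (simp add: sum_distrib_right)
  also have "\<dots> = (\<Sum>l\<in>UNIV. w l * h (x l))"
    by (rule sum.group) auto
  finally show ?thesis by simp
qed

definition active_flow :: "('v::finite \<Rightarrow> 'v \<Rightarrow> bool) \<Rightarrow> ('v \<Rightarrow> real) \<Rightarrow> ('k::finite \<Rightarrow> real)
    \<Rightarrow> ('k \<Rightarrow> 'v) \<Rightarrow> 'v \<Rightarrow> 'v \<Rightarrow> real" where
  "active_flow E s w x i j =
     (if E i j \<and> load s w x i - load s w x j > 1 / s j then flow E s w x i j else 0)"

lemma Wt_mult_move_rate:
  assumes "\<And>l. 0 \<le> w l" "\<And>i. 0 < s i"
  shows "Wt w x i * move_rate E s w x i j = active_flow E s w x i j"
proof (cases "E i j \<and> load s w x i - load s w x j > 1 / s j")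
  case True
  define \<Delta> where "\<Delta> = load s w x i - load s w x j"
  define \<sigma> where "\<sigma> = 1 / s i + 1 / s j"
  have "0 < 1 / s j" using assms(2) by simp
  with True load_nonneg[of w s x j, OF assms] have "0 < load s w x i" by linarith
  then have W: "0 < Wt w x i"
    using assms(2)[of i] by (simp add: load_def zero_less_divide_iff)
  have d: "0 < real (deg E i)"
    using True by (auto simp: deg_def card_gt_0_iff)
  then have m: "0 < real (dmax E i j)"
    by (simp add: dmax_def)
  have "0 < \<sigma>"
    using assms(2) by (simp add: \<sigma>_def add_pos_pos)
  have "Wt w x i * move_rate E s w x i j
      = Wt w x i * (real (deg E i) / real (dmax E i j) * (\<Delta> / (alpha s * \<sigma> * Wt w x i)))
        / real (deg E i)"
    using True by (simp add: move_rate_def move_prob_def \<Delta>_def \<sigma>_def)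
  also have "\<dots> = \<Delta> / (alpha s * real (dmax E i j) * \<sigma>)"
    using W d m \<open>0 < \<sigma>\<close> alpha_pos[of s, OF assms(2)] by (simp add: field_simps)
  also have "\<dots> = active_flow E s w x i j"
    using True by (simp add: active_flow_def flow_def \<Delta>_def \<sigma>_def)
  finally show ?thesis .
qed (auto simp: active_flow_def move_rate_def move_prob_def)

lemma variance_Wt_round_pmf_le:
  fixes E :: "'v::finite \<Rightarrow> 'v \<Rightarrow> bool" and w :: "'k::finite \<Rightarrow> real"
  assumes "\<And>i. \<not> E i i" "\<And>l. 0 \<le> w l" "\<And>l. w l \<le> 1" "\<And>i. 0 < s i"
  shows "measure_pmf.variance (round_pmf E s w x) (\<lambda>y. Wt w y i)
    \<le> (\<Sum>j\<in>UNIV. active_flow E s w x i j) + (\<Sum>k\<in>UNIV. active_flow E s w x k i)"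
proof -
  \<comment> \<open>The \<open>\<beta>\<close>-redex makes the unfolded goal an instance of \<open>variance_Pi_pmf_sum\<close>.\<close>
  have Wt_as_sum: "Wt w y i = (\<Sum>l\<in>UNIV. (\<lambda>l v. if v = i then w l else 0) l (y l))"
    for y :: "'k \<Rightarrow> 'v"
    unfolding Wt_def by (simp add: sum.If_cases)
  have "measure_pmf.variance (round_pmf E s w x) (\<lambda>y. Wt w y i)
      = (\<Sum>l\<in>UNIV. measure_pmf.variance (task_step E s w x l) (\<lambda>v. if v = i then w l else 0))"
    unfolding Wt_as_sum round_pmf_def by (rule variance_Pi_pmf_sum)
  also have "\<dots> \<le> (\<Sum>l\<in>UNIV. w l * ((if x l = i then \<Sum>j\<in>UNIV. move_rate E s w x i j else 0)
      + move_rate E s w x (x l) i))"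
    by (intro sum_mono variance_task_step_le assms)
  also have "\<dots> = (\<Sum>k\<in>UNIV. Wt w x k * ((if k = i then \<Sum>j\<in>UNIV. move_rate E s w x i j else 0)
      + move_rate E s w x k i))"
    by (rule sum_weights_by_processor)
  also have "\<dots> = Wt w x i * (\<Sum>j\<in>UNIV. move_rate E s w x i j)
      + (\<Sum>k\<in>UNIV. Wt w x k * move_rate E s w x k i)"
    by (simp add: distrib_left sum.distrib if_distrib[of "\<lambda>u. _ * u"] cong: if_cong)
  also have "\<dots> = (\<Sum>j\<in>UNIV. active_flow E s w x i j) + (\<Sum>k\<in>UNIV. active_flow E s w x k i)"
    by (simp add: sum_distrib_left Wt_mult_move_rate assms(2,4))
  finally show ?thesis .
qed

lemma sum_out_plus_in_divide:
  fixes f :: "'v::finite \<Rightarrow> 'v \<Rightarrow> real"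
  shows "(\<Sum>i\<in>UNIV. ((\<Sum>j\<in>UNIV. f i j) + (\<Sum>j\<in>UNIV. f j i)) / s i)
    = (\<Sum>i\<in>UNIV. \<Sum>j\<in>UNIV. f i j * (1 / s i + 1 / s j))"
proof -
  have "(\<Sum>i\<in>UNIV. \<Sum>j\<in>UNIV. f j i / s i) = (\<Sum>i\<in>UNIV. \<Sum>j\<in>UNIV. f i j / s j)"
    by (rule sum.swap)
  then show ?thesis
    by (simp add: add_divide_distrib sum.distrib sum_divide_distrib distrib_left)
qed

lemma sum_active_flow:
  "(\<Sum>i\<in>UNIV. \<Sum>j\<in>UNIV. active_flow E s w x i j * g i j)
    = (\<Sum>(i, j)\<in>{(i, j). E i j \<and> load s w x i - load s w x j > 1 / s j}. flow E s w x i j * g i j)"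
proof -
  let ?C = "{(i, j). E i j \<and> load s w x i - load s w x j > 1 / s j}"
  have "(\<Sum>(i, j)\<in>?C. flow E s w x i j * g i j)
      = (\<Sum>p\<in>UNIV. if p \<in> ?C then (case p of (i, j) \<Rightarrow> flow E s w x i j * g i j) else 0)"
    using sum.inter_restrict[of UNIV "\<lambda>(i, j). flow E s w x i j * g i j" ?C] by simp
  also have "\<dots> = (\<Sum>(i, j)\<in>UNIV. active_flow E s w x i j * g i j)"
    by (rule sum.cong) (auto simp: active_flow_def split: if_splits)
  finally show ?thesis
    by (simp add: sum.cartesian_product)
qed

theorem lemma34:
  fixes E :: "'v::finite \<Rightarrow> 'v \<Rightarrow> bool" and s :: "'v \<Rightarrow> real"
    and w :: "'k::finite \<Rightarrow> real" and x :: "'k \<Rightarrow> 'v"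
  assumes sym: "\<forall>i j. E i j \<longrightarrow> E j i"
    and irrefl: "\<forall>i. \<not> E i i"
    and spos: "\<forall>i. s i > 0"
    and wbd: "\<forall>l. 0 < w l \<and> w l \<le> 1"
  shows "(\<Sum>i\<in>UNIV. measure_pmf.variance (round_pmf E s w x) (\<lambda>y. Wt w y i) / s i)
         \<le> (\<Sum>(i, j)\<in>{(i, j). E i j \<and> load s w x i - load s w x j > 1 / s j}.
               flow E s w x i j * (1 / s i + 1 / s j))"
proof -
  have model: "\<And>i. \<not> E i i" "\<And>l. 0 \<le> w l" "\<And>l. w l \<le> 1" "\<And>i. 0 < s i"
    using irrefl wbd spos by (auto simp: less_imp_le)
  have "(\<Sum>i\<in>UNIV. measure_pmf.variance (round_pmf E s w x) (\<lambda>y. Wt w y i) / s i)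
      \<le> (\<Sum>i\<in>UNIV. ((\<Sum>j\<in>UNIV. active_flow E s w x i j) + (\<Sum>j\<in>UNIV. active_flow E s w x j i)) / s i)"
    using model by (intro sum_mono divide_right_mono variance_Wt_round_pmf_le) (simp_all add: less_imp_le)
  also have "\<dots> = (\<Sum>i\<in>UNIV. \<Sum>j\<in>UNIV. active_flow E s w x i j * (1 / s i + 1 / s j))"
    by (rule sum_out_plus_in_divide)
  also have "\<dots> = (\<Sum>(i, j)\<in>{(i, j). E i j \<and> load s w x i - load s w x j > 1 / s j}.
      flow E s w x i j * (1 / s i + 1 / s j))"
    by (rule sum_active_flow)
  finally show ?thesis .
qed

end
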